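(* Let $M$ be an $n$-dimensional manifold and let $g(t)$, $t\in[0,T)$, be a solution of the Ricci flow $\partial_t g_{ij}=-2R_{ij}$ on $M$. Let $\xi=\xi_{i_1\dots i_p}(x,t)$ be a smooth family of $p$-forms (anti-symmetric covariant $p$-tensors) satisfying the heat equation $$\frac{\partial \xi_{i_1\dots i_p}}{\partial t}=\Delta_d\,\xi_{i_1\dots i_p},$$ where $\Delta_d$ is the Hodge–de Rham Laplacian of $g(t)$ in the form $$\Delta_d\,\xi_{i_1\dots i_p}=g^{jk}\xi_{i_1\dots i_p;j;k}-\sum_{s=1}^{p}\xi_{i_1\dots i_{s-1}a\,i_{s+1}\dots i_p}R^{a}_{\ i_s}-\sum_{1\le s<t\le p}\xi_{i_1\dots i_{s-1}a\,i_{s+1}\dots i_{t-1}b\,i_{t+1}\dots i_p}R^{ab}_{\ \ i_si_t}.$$ Then $$\frac{\partial}{\partial t}|\xi|^2=\Delta|\xi|^2-2\,\xi^{i_1\dots i_p;j}\xi_{i_1\dots i_p;j}-p(p-1)\,\xi_{ij i_1\dots i_{p-2}}R^{ij}_{\ \ kl}\,\xi^{kl i_1\dots i_{p-2}},$$ where $|\xi|^2=g^{i_1k_1}\cdots g^{i_pk_p}\xi_{i_1\dots i_p}\xi_{k_1\dots k_p}$ and $\Delta f=g^{ij}f_{;i;j}$ is the Laplacian of $g(t)$ on functions.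
   Context: All quantities are computed with respect to $g(t)$; indices are raised and lowered with $g(t)$, and "$;j$" denotes covariant differentiation. Curvature conventions: $R^{l}_{\ ijk}=\partial_i\Gamma^l_{jk}-\partial_j\Gamma^l_{ik}+\Gamma^l_{im}\Gamma^m_{jk}-\Gamma^l_{jm}\Gamma^m_{ik}$, $R_{ijkl}=g_{hl}R^{h}_{\ ijk}$, $R_{jk}=R^{i}_{\ ijk}$ (Ricci tensor), $R^{a}_{\ i}=g^{ab}R_{bi}$, and $R^{ij}_{\ \ kl}=g^{ia}g^{jb}R_{abkl}$. *)

theory Defs
  imports "HOL-Analysis.Analysis"
begin

fun iter_pd :: "'a::real_normed_vector list \<Rightarrow> ('a \<Rightarrow> real) \<Rightarrow> 'a \<Rightarrow> real" where
  "iter_pd [] f = f"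
| "iter_pd (v # vs) f = (\<lambda>x. deriv (\<lambda>h. iter_pd vs f (x + h *\<^sub>R v)) 0)"

text \<open>C-infinity on W: all iterated partial derivatives (along coordinate directions)
  exist and are continuous on W (W is meant to be open).\<close>
definition Cinf_on :: "'a::euclidean_space set \<Rightarrow> ('a \<Rightarrow> real) \<Rightarrow> bool" where
  "Cinf_on W f \<longleftrightarrow>
     (\<forall>vs. set vs \<subseteq> Basis \<longrightarrow>
        continuous_on W (iter_pd vs f) \<and>
        (\<forall>x\<in>W. \<forall>v\<in>Basis. (\<lambda>h. iter_pd vs f (x + h *\<^sub>R v)) differentiable (at 0)))"

text \<open>A metric on a chart: G x is the matrix (g_ij(x)). Covariant tensors are functions
  T :: real^'n => 'n list => real, the list being the index tuple (i_1,...,i_q).\<close>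

definition pd :: "'n::finite \<Rightarrow> (real^'n \<Rightarrow> real) \<Rightarrow> real^'n \<Rightarrow> real" where
  "pd i f x = deriv (\<lambda>h. f (x + h *\<^sub>R axis i 1)) 0"

definition ginv :: "(real^'n \<Rightarrow> real^'n^'n) \<Rightarrow> real^'n \<Rightarrow> 'n::finite \<Rightarrow> 'n \<Rightarrow> real" where
  "ginv G x i j = matrix_inv (G x) $ i $ j"

definition Chr :: "(real^'n \<Rightarrow> real^'n^'n) \<Rightarrow> real^'n \<Rightarrow> 'n::finite \<Rightarrow> 'n \<Rightarrow> 'n \<Rightarrow> real" where
  "Chr G x l j k = (1/2) * (\<Sum>m\<in>UNIV. ginv G x l m *
      (pd j (\<lambda>y. G y $ m $ k) x + pd k (\<lambda>y. G y $ m $ j) x - pd m (\<lambda>y. G y $ j $ k) x))"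

text \<open>Covariant derivative: (cov G T) x (I @ [j]) = T_{I;j}.\<close>
definition cov :: "(real^'n \<Rightarrow> real^'n^'n) \<Rightarrow> (real^'n \<Rightarrow> 'n list \<Rightarrow> real)
                   \<Rightarrow> real^'n \<Rightarrow> 'n::finite list \<Rightarrow> real" where
  "cov G T x L = (let I = butlast L; j = last L in
     pd j (\<lambda>y. T y I) x
     - (\<Sum>s<length I. \<Sum>a\<in>UNIV. Chr G x a j (I ! s) * T x (I[s := a])))"

definition Riem_up :: "(real^'n \<Rightarrow> real^'n^'n) \<Rightarrow> real^'n \<Rightarrow> 'n::finite \<Rightarrow> 'n \<Rightarrow> 'n \<Rightarrow> 'n \<Rightarrow> real" where
  "Riem_up G x l i j k =
     pd i (\<lambda>y. Chr G y l j k) x - pd j (\<lambda>y. Chr G y l i k) x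
     + (\<Sum>m\<in>UNIV. Chr G x l i m * Chr G x m j k - Chr G x l j m * Chr G x m i k)"

definition Riem_low :: "(real^'n \<Rightarrow> real^'n^'n) \<Rightarrow> real^'n \<Rightarrow> 'n::finite \<Rightarrow> 'n \<Rightarrow> 'n \<Rightarrow> 'n \<Rightarrow> real" where
  "Riem_low G x i j k l = (\<Sum>h\<in>UNIV. G x $ h $ l * Riem_up G x h i j k)"

definition Ric :: "(real^'n \<Rightarrow> real^'n^'n) \<Rightarrow> real^'n \<Rightarrow> 'n::finite \<Rightarrow> 'n \<Rightarrow> real" where
  "Ric G x j k = (\<Sum>i\<in>UNIV. Riem_up G x i i j k)"

definition Ric_mixed :: "(real^'n \<Rightarrow> real^'n^'n) \<Rightarrow> real^'n \<Rightarrow> 'n::finite \<Rightarrow> 'n \<Rightarrow> real" where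
  "Ric_mixed G x a i = (\<Sum>b\<in>UNIV. ginv G x a b * Ric G x b i)"

definition Riem_uudd :: "(real^'n \<Rightarrow> real^'n^'n) \<Rightarrow> real^'n \<Rightarrow> 'n::finite \<Rightarrow> 'n \<Rightarrow> 'n \<Rightarrow> 'n \<Rightarrow> real" where
  "Riem_uudd G x a b k l = (\<Sum>c\<in>UNIV. \<Sum>d\<in>UNIV. ginv G x a c * ginv G x b d * Riem_low G x c d k l)"

definition tuples :: "nat \<Rightarrow> 'n::finite list set" where
  "tuples q = {L. length L = q}"

definition tinner :: "(real^'n \<Rightarrow> real^'n^'n) \<Rightarrow> real^'n \<Rightarrow> nat
                      \<Rightarrow> ('n::finite list \<Rightarrow> real) \<Rightarrow> ('n list \<Rightarrow> real) \<Rightarrow> real" where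
  "tinner G x q A B = (\<Sum>I\<in>tuples q. \<Sum>K\<in>tuples q.
       (\<Prod>s<q. ginv G x (I ! s) (K ! s)) * A I * B K)"

definition normsq :: "(real^'n \<Rightarrow> real^'n^'n) \<Rightarrow> (real^'n \<Rightarrow> 'n::finite list \<Rightarrow> real) \<Rightarrow> nat \<Rightarrow> real^'n \<Rightarrow> real" where
  "normsq G \<xi> p x = tinner G x p (\<xi> x) (\<xi> x)"

definition lap :: "(real^'n \<Rightarrow> real^'n^'n) \<Rightarrow> (real^'n \<Rightarrow> real) \<Rightarrow> real^'n \<Rightarrow> real" where
  "lap G f x = (\<Sum>i\<in>UNIV. \<Sum>j\<in>(UNIV::'n::finite set).
      ginv G x i j * cov G (cov G (\<lambda>y _. f y)) x [i, j])"

definition hodge_lap :: "(real^'n \<Rightarrow> real^'n^'n) \<Rightarrow> (real^'n \<Rightarrow> 'n::finite list \<Rightarrow> real) \<Rightarrow> nat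
                         \<Rightarrow> real^'n \<Rightarrow> 'n list \<Rightarrow> real" where
  "hodge_lap G \<xi> p x I =
     (\<Sum>j\<in>UNIV. \<Sum>k\<in>UNIV. ginv G x j k * cov G (cov G \<xi>) x (I @ [j, k]))
     - (\<Sum>s<p. \<Sum>a\<in>UNIV. \<xi> x (I[s := a]) * Ric_mixed G x a (I ! s))
     - (\<Sum>s<p. \<Sum>r\<in>{s<..<p}. \<Sum>a\<in>UNIV. \<Sum>b\<in>UNIV.
          \<xi> x (I[s := a, r := b]) * Riem_uudd G x a b (I ! s) (I ! r))"

definition curv_term :: "(real^'n \<Rightarrow> real^'n^'n) \<Rightarrow> (real^'n \<Rightarrow> 'n::finite list \<Rightarrow> real) \<Rightarrow> nat \<Rightarrow> real^'n \<Rightarrow> real" where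
  "curv_term G \<xi> p x =
     (\<Sum>i\<in>UNIV. \<Sum>j\<in>UNIV. \<Sum>k\<in>UNIV. \<Sum>l\<in>UNIV. \<Sum>k2\<in>UNIV. \<Sum>l2\<in>UNIV.
      \<Sum>J\<in>tuples (p - 2). \<Sum>K\<in>tuples (p - 2).
        \<xi> x ([i, j] @ J) * Riem_uudd G x i j k l
        * ginv G x k k2 * ginv G x l l2 * (\<Prod>s<p - 2. ginv G x (J ! s) (K ! s))
        * \<xi> x ([k2, l2] @ K))"

end

theory Submission
  imports Defs
begin

text \<open>
  Differentiate \<open>|\<xi>|\<^sup>2 = g\<^sup>I\<^sup>K \<xi>\<^sub>I \<xi>\<^sub>K\<close> in time. Under the Ricci flow \<open>\<partial>\<^sub>t g\<^sup>a\<^sup>b = 2 R\<^sup>a\<^sup>b\<close>;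
  the terms this produces cancel exactly the Ricci terms of \<open>\<Delta>\<^sub>d \<xi>\<close> paired with \<open>\<xi>\<close>.
  Metric compatibility of the Levi-Civita connection, which in coordinates is the formula
  \<open>\<partial>\<^sub>k g\<^sup>a\<^sup>b = - g\<^sup>a\<^sup>c \<Gamma>\<^sup>b\<^sub>k\<^sub>c - g\<^sup>b\<^sup>c \<Gamma>\<^sup>a\<^sub>k\<^sub>c\<close>, gives the Leibniz rule for the covariant
  derivative of a contraction and hence \<open>\<Delta>|\<xi>|\<^sup>2 = 2\<langle>g\<^sup>j\<^sup>k \<xi>\<^sub>;\<^sub>j\<^sub>;\<^sub>k, \<xi>\<rangle> + 2|\<nabla>\<xi>|\<^sup>2\<close>.
  Finally, by antisymmetry of \<open>\<xi>\<close> each of the \<open>p(p-1)/2\<close> curvature terms of \<open>\<Delta>\<^sub>d \<xi>\<close>,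
  paired with \<open>\<xi>\<close>, equals the one acting on the first two slots, which is the curvature
  term of the statement.
\<close>

section \<open>Sums over index tuples\<close>

lemma finite_tuples [simp]: "finite (tuples q :: 'n::finite list set)"
  using finite_lists_length_eq[OF finite_class.finite_UNIV, of q] unfolding tuples_def by simp

lemma sum_rotate3: "(\<Sum>I\<in>A. \<Sum>K\<in>B. \<Sum>u\<in>C. f I K u) = (\<Sum>u\<in>C. \<Sum>I\<in>A. \<Sum>K\<in>B. (f I K u::'a::comm_monoid_add))"
proof -
  have "(\<Sum>I\<in>A. \<Sum>K\<in>B. \<Sum>u\<in>C. f I K u) = (\<Sum>I\<in>A. \<Sum>u\<in>C. \<Sum>K\<in>B. f I K u)"
    by (rule sum.cong[OF refl], rule sum.swap)
  also have "\<dots> = (\<Sum>u\<in>C. \<Sum>I\<in>A. \<Sum>K\<in>B. f I K u)" by (rule sum.swap)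
  finally show ?thesis .
qed

lemma sum_tuples_snoc:
  "(\<Sum>L\<in>tuples (Suc q). f L) = (\<Sum>I\<in>tuples q. \<Sum>i\<in>(UNIV::'n::finite set). (f (I @ [i]) :: 'a::comm_monoid_add))"
proof -
  have bl: "butlast L @ [last L] = L" if "length L = Suc q" for L :: "'n list"
    using that by (metis append_butlast_last_id list.size(3) nat.distinct(1))
  have "(\<Sum>L\<in>tuples (Suc q). f L) = (\<Sum>(I,i)\<in>tuples q \<times> (UNIV::'n set). f (I @ [i]))"
    by (rule sum.reindex_bij_witness[where i="\<lambda>(I,i). I @ [i]" and j="\<lambda>L. (butlast L, last L)"])
       (auto simp: tuples_def bl)
  then show ?thesis by (simp add: sum.cartesian_product)
qed

lemma sum_tuples_Cons:
  "(\<Sum>L\<in>tuples (Suc q). f L) = (\<Sum>i\<in>(UNIV::'n::finite set). \<Sum>J\<in>tuples q. (f (i # J) :: 'a::comm_monoid_add))"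
proof -
  have hd_tl: "hd L # tl L = L" if "length L = Suc q" for L :: "'n list"
    using that by (metis hd_Cons_tl list.size(3) nat.distinct(1))
  have "(\<Sum>L\<in>tuples (Suc q). f L) = (\<Sum>(i,J)\<in>(UNIV::'n set) \<times> tuples q. f (i # J))"
    by (rule sum.reindex_bij_witness[where i="\<lambda>(i,J). i # J" and j="\<lambda>L. (hd L, tl L)"])
       (auto simp: tuples_def hd_tl)
  then show ?thesis by (simp add: sum.cartesian_product)
qed

lemma sum_tuples_update_swap:
  fixes h :: "'n::finite list \<Rightarrow> 'n list \<Rightarrow> 'a::comm_monoid_add"
  assumes "u < q"
  shows "(\<Sum>I\<in>tuples q. \<Sum>a\<in>UNIV. h I (I[u:=a])) = (\<Sum>J\<in>tuples q. \<Sum>b\<in>UNIV. h (J[u:=b]) J)"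
proof -
  have "(\<Sum>(I,a)\<in>tuples q \<times> UNIV. h I (I[u:=a])) = (\<Sum>(J,b)\<in>tuples q \<times> UNIV. h (J[u:=b]) J)"
    by (rule sum.reindex_bij_witness[where i="\<lambda>(I,a). (I[u:=a], I!u)" and j="\<lambda>(I,a). (I[u:=a], I!u)"])
       (use assms in \<open>auto simp: tuples_def\<close>)
  then show ?thesis by (simp add: sum.cartesian_product)
qed

lemma prod_update_nth:
  assumes "length J = q" "u < q"
  shows "(\<Prod>w<q. f ((J[u:=b])!w) (K!w)) = f b (K!u) * (\<Prod>w\<in>{..<q}-{u}. f (J!w) (K!w))"
proof -
  have "(\<Prod>w\<in>{..<q}-{u}. f ((J[u:=b])!w) (K!w)) = (\<Prod>w\<in>{..<q}-{u}. f (J!w) (K!w))"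
    by (rule prod.cong) auto
  then show ?thesis using assms by (simp add: prod.remove)
qed

lemma sum_pairs_const: "(\<Sum>s<p. \<Sum>r\<in>{s<..<p}. (c::real)) = c * (real p * (real p - 1) / 2)"
proof (induction p)
  case (Suc p)
  have "(\<Sum>r\<in>{s<..<Suc p}. c) = c + (\<Sum>r\<in>{s<..<p}. c)" if "s < p" for s
    using that by (simp add: of_nat_diff algebra_simps)
  then have "(\<Sum>s<Suc p. \<Sum>r\<in>{s<..<Suc p}. c) = real p * c + (\<Sum>s<p. \<Sum>r\<in>{s<..<p}. c)"
    by (simp add: sum.distrib)
  then show ?case using Suc.IH by (simp add: field_simps)
qed simp

section \<open>Derivatives of products and of the inverse matrix\<close>

lemma has_field_derivative_prod_within:
  fixes f :: "'i \<Rightarrow> real \<Rightarrow> real"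
  assumes "\<And>i. i \<in> A \<Longrightarrow> (f i has_real_derivative f' i) (at x within S)"
  shows "((\<lambda>u. \<Prod>i\<in>A. f i u) has_real_derivative (\<Sum>i\<in>A. f' i * (\<Prod>j\<in>A-{i}. f j x))) (at x within S)"
proof -
  have "((\<lambda>u. \<Prod>i\<in>A. f i u) has_derivative (\<lambda>y. \<Sum>i\<in>A. (\<lambda>h. f' i * h) y * (\<Prod>j\<in>A - {i}. f j x))) (at x within S)"
    using assms unfolding has_field_derivative_def
    by (intro has_derivative_prod) auto
  then show ?thesis
    by (rule has_derivative_imp_has_field_derivative) (simp add: sum_distrib_left ac_simps)
qed

lemma differentiable_prod:
  fixes f :: "'i \<Rightarrow> real \<Rightarrow> real"
  assumes "\<And>i. i \<in> A \<Longrightarrow> f i differentiable (at x within S)"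
  shows "(\<lambda>x. \<Prod>i\<in>A. f i x) differentiable (at x within S)"
proof -
  obtain D where "\<And>i. i \<in> A \<Longrightarrow> (f i has_real_derivative D i) (at x within S)"
    using assms unfolding real_differentiable_def by metis
  then show ?thesis
    unfolding real_differentiable_def by (blast intro: has_field_derivative_prod_within)
qed

lemma det_differentiable:
  fixes H :: "real \<Rightarrow> real^'n::finite^'n"
  assumes "\<And>i j. (\<lambda>s. H s $ i $ j) differentiable (at t within S)"
  shows "(\<lambda>s. det (H s)) differentiable (at t within S)"
  unfolding det_def
  by (intro differentiable_sum finite_permutations finite_class.finite_UNIV ballI differentiable_mult
      differentiable_const differentiable_prod assms)

lemma matrix_mul3_nth:
  "((A::real^'n::finite^'n) ** B ** C) $ i $ j = (\<Sum>a\<in>UNIV. \<Sum>b\<in>UNIV. A $ i $ a * B $ a $ b * C $ b $ j)"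
  by (simp add: matrix_matrix_mult_def sum_distrib_right) (rule sum.swap)

lemma matrix_inv_mul:
  fixes A :: "real^'n::finite^'n"
  assumes "det A \<noteq> 0"
  shows "A ** matrix_inv A = mat 1" "matrix_inv A ** A = mat 1"
proof -
  have "\<exists>A'. A ** A' = mat 1 \<and> A' ** A = mat 1"
    using assms invertible_det_nz unfolding invertible_def by blast
  then have "A ** matrix_inv A = mat 1 \<and> matrix_inv A ** A = mat 1"
    unfolding matrix_inv_def by (rule someI_ex)
  then show "A ** matrix_inv A = mat 1" "matrix_inv A ** A = mat 1" by auto
qed

lemma matrix_inv_symmetric:
  fixes A :: "real^'n::finite^'n"
  assumes "det A \<noteq> 0" "\<And>i j. A $ i $ j = A $ j $ i"
  shows "matrix_inv A $ a $ b = matrix_inv A $ b $ a"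
proof -
  let ?M = "matrix_inv A"
  have AT: "transpose A = A" using assms(2) by (simp add: transpose_def vec_eq_iff)
  have 1: "A ** ?M = mat 1" using matrix_inv_mul[OF assms(1)] by auto
  have "transpose ?M ** A = mat 1"
    using arg_cong[OF 1, of transpose] by (simp add: matrix_transpose_mul AT transpose_mat)
  then have "transpose ?M = transpose ?M ** (A ** ?M)" using 1 by simp
  also have "\<dots> = ?M" by (simp add: matrix_mul_assoc \<open>transpose ?M ** A = mat 1\<close>)
  finally have "transpose ?M $ a $ b = ?M $ a $ b" by simp
  then show ?thesis by (simp add: transpose_def)
qed

lemma det_nonzero_if_posdef:
  fixes A :: "real^'n::finite^'n"
  assumes "\<And>v. v \<noteq> 0 \<Longrightarrow> v \<bullet> (A *v v) > 0"
  shows "det A \<noteq> 0"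
proof -
  have "\<forall>x. A *v x = 0 \<longrightarrow> x = 0"
    using assms by (metis inner_zero_right less_irrefl)
  then have "invertible A"
    using matrix_left_invertible_ker invertible_left_inverse by blast
  then show ?thesis using invertible_det_nz by blast
qed

lemma matrix_inv_cramer:
  fixes A :: "real^'n::finite^'n"
  assumes "det A \<noteq> 0"
  shows "matrix_inv A $ k $ j = det (\<chi> i l. if l = k then (if i = j then 1 else 0) else A$i$l) / det A"
proof -
  let ?x = "(\<chi> r. matrix_inv A $ r $ j)"
  have "A *v ?x = (\<chi> i. (A ** matrix_inv A) $ i $ j)"
    by (simp add: matrix_vector_mult_def matrix_matrix_mult_def)
  also have "\<dots> = (\<chi> i. if i = j then 1 else 0)"
    using matrix_inv_mul(1)[OF assms] by (simp add: mat_def)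
  finally have "?x = (\<chi> k. det(\<chi> i l. if l=k then (\<chi> i. if i = j then (1::real) else 0)$i else A$i$l) / det A)"
    using cramer[OF assms] by blast
  then have "?x $ k = det(\<chi> i l. if l=k then (\<chi> i. if i = j then (1::real) else 0)$i else A$i$l) / det A"
    by simp
  then show ?thesis by (simp only: vec_lambda_beta)
qed

text \<open>\<open>matrix_inv\<close> is defined by choice, so it agrees with the Cramer quotient \<open>C\<close> only where
  the determinant does not vanish.\<close>
lemma matrix_inv_differentiable:
  fixes G :: "real \<Rightarrow> real^'n::finite^'n"
  assumes "\<And>i j. (\<lambda>s. G s $ i $ j) differentiable (at t within S)" and "det (G t) \<noteq> 0"
  shows "\<exists>C. (\<forall>k j. (\<lambda>s. C s k j) differentiable (at t within S)) \<and>
             (\<forall>s k j. det (G s) \<noteq> 0 \<longrightarrow> matrix_inv (G s) $ k $ j = C s k j)"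
proof (intro exI conjI allI impI)
  let ?C = "\<lambda>s k j. det (\<chi> i l. if l = k then (if i = j then 1 else 0) else G s $i$l) / det (G s)"
  fix k j
  have "(\<lambda>s. (\<chi> i l. if l = k then (if i = j then 1 else 0) else G s $i$l) $ a $ b)
          differentiable (at t within S)" for a b
    by (cases "b = k") (auto intro: assms(1))
  then show "(\<lambda>s. ?C s k j) differentiable (at t within S)"
    by (intro differentiable_divide det_differentiable assms)
next
  fix s k j assume "det (G s) \<noteq> 0"
  then show "matrix_inv (G s) $ k $ j =
      det (\<chi> i l. if l = k then (if i = j then 1 else 0) else G s $i$l) / det (G s)"
    by (rule matrix_inv_cramer)
qed

lemma matrix_inv_resolvent:
  fixes A B :: "real^'n::finite^'n"
  assumes "det A \<noteq> 0" "det B \<noteq> 0"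
  shows "matrix_inv A $ i $ j = matrix_inv B $ i $ j
           - (\<Sum>a\<in>UNIV. \<Sum>b\<in>UNIV. matrix_inv A $ i $ a * (A $ a $ b - B $ a $ b) * matrix_inv B $ b $ j)"
proof -
  have 1: "matrix_inv A ** A ** matrix_inv B = matrix_inv B"
    using matrix_inv_mul[OF assms(1)] by simp
  have 2: "matrix_inv A ** B ** matrix_inv B = matrix_inv A"
    using matrix_inv_mul[OF assms(2)] by (simp flip: matrix_mul_assoc)
  have "(\<Sum>a\<in>UNIV. \<Sum>b\<in>UNIV. matrix_inv A $ i $ a * (A $ a $ b - B $ a $ b) * matrix_inv B $ b $ j)
     = (\<Sum>a\<in>UNIV. \<Sum>b\<in>UNIV. matrix_inv A $ i $ a * A $ a $ b * matrix_inv B $ b $ j)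
      - (\<Sum>a\<in>UNIV. \<Sum>b\<in>UNIV. matrix_inv A $ i $ a * B $ a $ b * matrix_inv B $ b $ j)"
    by (simp add: algebra_simps sum_subtractf)
  also have "\<dots> = matrix_inv B $ i $ j - matrix_inv A $ i $ j"
    unfolding matrix_mul3_nth[symmetric] 1 2 ..
  finally show ?thesis by simp
qed

lemma eventually_det_nonzero:
  fixes G :: "real \<Rightarrow> real^'n::finite^'n"
  assumes "\<And>i j. (\<lambda>s. G s $ i $ j) differentiable (at t within S)" and "det (G t) \<noteq> 0"
  shows "\<forall>\<^sub>F s in at t within S. det (G s) \<noteq> 0"
proof -
  have "continuous (at t within S) (\<lambda>s. det (G s))"
    using det_differentiable[OF assms(1)] differentiable_imp_continuous_within by blast
  then show ?thesis
    using assms(2) unfolding continuous_within by (rule tendsto_imp_eventually_ne)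
qed

text \<open>
  Near \<open>t\<close> the resolvent identity writes \<open>G(s)\<^sup>-\<^sup>1\<close> as \<open>G(t)\<^sup>-\<^sup>1\<close> minus a product of the
  differentiable function \<open>C s\<close> (Cramer) with \<open>G s - G t\<close>, which vanishes at \<open>t\<close>.
\<close>
lemma matrix_inv_has_derivative:
  fixes G :: "real \<Rightarrow> real^'n::finite^'n"
  assumes dG: "\<And>i j. ((\<lambda>s. G s $ i $ j) has_real_derivative G' i j) (at t within S)"
    and nz: "det (G t) \<noteq> 0" and tS: "t \<in> S"
  shows "((\<lambda>s. matrix_inv (G s) $ i $ j) has_real_derivative
           - (\<Sum>a\<in>UNIV. \<Sum>b\<in>UNIV. matrix_inv (G t) $ i $ a * G' a b * matrix_inv (G t) $ b $ j))
         (at t within S)"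
proof -
  define M where "M = matrix_inv (G t)"
  have diffG: "\<And>i j. (\<lambda>s. G s $ i $ j) differentiable (at t within S)"
    using dG unfolding real_differentiable_def by blast
  obtain C where dC: "\<And>k j. (\<lambda>s. C s k j) differentiable (at t within S)"
    and CM: "\<And>s k j. det (G s) \<noteq> 0 \<Longrightarrow> matrix_inv (G s) $ k $ j = C s k j"
    using matrix_inv_differentiable[OF diffG nz] by blast
  define F where "F = (\<lambda>s. M $ i $ j - (\<Sum>a\<in>UNIV. \<Sum>b\<in>UNIV. C s i a * (G s $ a $ b - G t $ a $ b) * M $ b $ j))"
  have "F s = matrix_inv (G s) $ i $ j" if "det (G s) \<noteq> 0" for s
    unfolding F_def M_def matrix_inv_resolvent[OF that nz, of i j] by (simp add: CM[OF that])
  then have evF: "\<forall>\<^sub>F s in at t within S. F s = matrix_inv (G s) $ i $ j"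
    using eventually_det_nonzero[OF diffG nz] by (simp add: eventually_mono)
  have Ft: "F t = matrix_inv (G t) $ i $ j"
    by (simp add: F_def M_def)
  obtain DC where DC: "\<And>a. ((\<lambda>s. C s i a) has_real_derivative DC a) (at t within S)"
    using dC unfolding real_differentiable_def by metis
  have CMt: "C t i a = M $ i $ a" for a
    using CM[OF nz] unfolding M_def by simp
  have d1: "((\<lambda>s. C s i a * (G s $ a $ b - G t $ a $ b) * M $ b $ j) has_real_derivative
          (M $ i $ a * G' a b * M $ b $ j)) (at t within S)" for a b
  proof -
    have "((\<lambda>s. C s i a * (G s $ a $ b - G t $ a $ b)) has_real_derivative
              (C t i a * (G' a b - 0) + DC a * (G t $ a $ b - G t $ a $ b))) (at t within S)"
      by (rule DERIV_mult'[OF DC DERIV_diff[OF dG DERIV_const]])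
    then show ?thesis
      by (simp add: CMt DERIV_cmult_right)
  qed
  have "(F has_real_derivative 0 - (\<Sum>a\<in>UNIV. \<Sum>b\<in>UNIV. M $ i $ a * G' a b * M $ b $ j)) (at t within S)"
    unfolding F_def by (intro DERIV_diff DERIV_const DERIV_sum d1)
  then have "(F has_real_derivative - (\<Sum>a\<in>UNIV. \<Sum>b\<in>UNIV. M $ i $ a * G' a b * M $ b $ j)) (at t within S)"
    by simp
  then show ?thesis
    unfolding M_def has_field_derivative_def
    by (rule has_derivative_transform_eventually[OF _ evF Ft tS])
qed

section \<open>Partial derivatives along coordinate lines\<close>

lemma pd_has_real_derivative:
  assumes "(\<lambda>h. f (y + h *\<^sub>R axis k (1::real))) differentiable (at 0)"
  shows "((\<lambda>h. f (y + h *\<^sub>R axis k (1::real))) has_real_derivative pd k f y) (at 0)"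
  using assms unfolding pd_def by (simp add: DERIV_deriv_iff_real_differentiable)

lemma pd_eqI:
  assumes "((\<lambda>h. f (y + h *\<^sub>R axis k (1::real))) has_real_derivative D) (at 0)"
  shows "pd k f y = D"
  using assms unfolding pd_def by (rule DERIV_imp_deriv)

lemma eventually_line_in_open:
  fixes y v :: "'a::real_normed_vector"
  assumes "open U" "y \<in> U"
  shows "\<forall>\<^sub>F h in nhds 0. y + h *\<^sub>R v \<in> U"
proof -
  have "open ((\<lambda>h::real. y + h *\<^sub>R v) -` U)"
    by (rule open_vimage[OF assms(1)]) (intro continuous_intros)
  moreover have "0 \<in> (\<lambda>h::real. y + h *\<^sub>R v) -` U" using assms(2) by simp
  ultimately show ?thesis
    unfolding eventually_nhds by blast
qed

lemma pd_cong_open: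
  fixes f g :: "real^'n::finite \<Rightarrow> real"
  assumes "open U" "y \<in> U" "\<And>z. z \<in> U \<Longrightarrow> f z = g z"
  shows "pd k f y = pd k g y"
  unfolding pd_def
proof (rule deriv_cong_ev)
  show "\<forall>\<^sub>F h in nhds 0. f (y + h *\<^sub>R axis k (1::real)) = g (y + h *\<^sub>R axis k (1::real))"
    using eventually_line_in_open[OF assms(1,2), of "axis k (1::real)"]
    by eventually_elim (use assms(3) in auto)
qed simp

lemma axis_in_Basis_prod: "((0::real), axis k (1::real)) \<in> (Basis :: (real \<times> (real^'n::finite)) set)"
  by (auto simp: Basis_prod_def Basis_vec_def)

lemma Cinf_on_line_differentiable:
  fixes \<phi> :: "real \<Rightarrow> real^'n::finite \<Rightarrow> real"
  assumes "Cinf_on W (\<lambda>z. \<phi> (fst z) (snd z))" "(t, y) \<in> W"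
  shows "(\<lambda>h. \<phi> t (y + h *\<^sub>R axis k (1::real))) differentiable (at 0)"
proof -
  have "set ([] :: (real \<times> (real^'n)) list) \<subseteq> Basis" by simp
  with assms(1) have "\<forall>x\<in>W. \<forall>v\<in>Basis.
      (\<lambda>h. iter_pd [] (\<lambda>z. \<phi> (fst z) (snd z)) (x + h *\<^sub>R v)) differentiable (at 0)"
    unfolding Cinf_on_def by blast
  then have "(\<lambda>h. iter_pd [] (\<lambda>z. \<phi> (fst z) (snd z)) ((t, y) + h *\<^sub>R (0, axis k 1))) differentiable (at 0)"
    using assms(2) axis_in_Basis_prod by blast
  then show ?thesis by simp
qed

lemma Cinf_on_pd_line_differentiable:
  fixes \<phi> :: "real \<Rightarrow> real^'n::finite \<Rightarrow> real"
  assumes "Cinf_on W (\<lambda>z. \<phi> (fst z) (snd z))" "(t, y) \<in> W"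
  shows "(\<lambda>h. pd k (\<phi> t) (y + h *\<^sub>R axis l (1::real))) differentiable (at 0)"
proof -
  have "set [((0::real), axis k (1::real))] \<subseteq> Basis" using axis_in_Basis_prod by simp
  with assms(1) have "\<forall>x\<in>W. \<forall>v\<in>Basis.
      (\<lambda>h. iter_pd [(0, axis k 1)] (\<lambda>z. \<phi> (fst z) (snd z)) (x + h *\<^sub>R v)) differentiable (at 0)"
    unfolding Cinf_on_def by blast
  then have "(\<lambda>h. iter_pd [(0, axis k 1)] (\<lambda>z. \<phi> (fst z) (snd z)) ((t, y) + h *\<^sub>R (0, axis l 1)))
               differentiable (at 0)"
    using assms(2) axis_in_Basis_prod by blast
  moreover have "(\<lambda>h. iter_pd [(0, axis k 1)] (\<lambda>z. \<phi> (fst z) (snd z)) ((t, y) + h *\<^sub>R (0, axis l 1)))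
      = (\<lambda>h. pd k (\<phi> t) (y + h *\<^sub>R axis l (1::real)))"
    by (simp add: pd_def algebra_simps)
  ultimately show ?thesis by simp
qed

section \<open>Contractions of covariant tensors\<close>

lemma tinner_commute:
  assumes "\<And>a b. ginv G x a b = ginv G x b a"
  shows "tinner G x q A B = tinner G x q B A"
  unfolding tinner_def by (subst sum.swap) (simp add: assms ac_simps)

lemma tinner_sum_left: "tinner G x q (\<lambda>I. \<Sum>a\<in>S. f a I) B = (\<Sum>a\<in>S. tinner G x q (f a) B)"
  unfolding tinner_def by (simp add: sum_distrib_left sum_distrib_right) (rule sum_rotate3)

lemma tinner_scale_left: "tinner G x q (\<lambda>I. c * A I) B = c * tinner G x q A B"
  unfolding tinner_def by (simp add: sum_distrib_left ac_simps)

lemma tinner_diff_left: "tinner G x q (\<lambda>I. A I - C I) B = tinner G x q A B - tinner G x q C B"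
  unfolding tinner_def by (simp add: algebra_simps sum_subtractf)

lemma tinner_Suc:
  "tinner G x (Suc q) C D =
     (\<Sum>i\<in>UNIV. \<Sum>j\<in>UNIV. ginv G x i j * tinner G x q (\<lambda>I. C (I @ [i])) (\<lambda>K. D (K @ [j])))"
proof -
  let ?P = "\<lambda>I K. \<Prod>s<q. ginv G x (I ! s) (K ! s)"
  have snoc: "(\<Prod>s<Suc q. ginv G x ((I @ [i]) ! s) ((K @ [j]) ! s)) = ?P I K * ginv G x i j"
    if "I \<in> tuples q" "K \<in> tuples q" for I K i j
  proof -
    have l: "length I = q" "length K = q" using that by (auto simp: tuples_def)
    have "(\<Prod>s<q. ginv G x ((I @ [i]) ! s) ((K @ [j]) ! s)) = ?P I K"
      by (rule prod.cong) (auto simp: nth_append l)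
    then show ?thesis by (simp add: l nth_append)
  qed
  have "tinner G x (Suc q) C D = (\<Sum>I\<in>tuples q. \<Sum>i\<in>UNIV. \<Sum>K\<in>tuples q. \<Sum>j\<in>UNIV.
          ?P I K * ginv G x i j * C (I @ [i]) * D (K @ [j]))"
    unfolding tinner_def sum_tuples_snoc by (intro sum.cong refl) (simp only: snoc)
  also have "\<dots> = (\<Sum>I\<in>tuples q. \<Sum>K\<in>tuples q. \<Sum>i\<in>UNIV. \<Sum>j\<in>UNIV.
          ?P I K * ginv G x i j * C (I @ [i]) * D (K @ [j]))"
    by (intro sum.cong refl sum.swap)
  also have "\<dots> = (\<Sum>i\<in>UNIV. \<Sum>j\<in>UNIV. \<Sum>I\<in>tuples q. \<Sum>K\<in>tuples q.
          ?P I K * ginv G x i j * C (I @ [i]) * D (K @ [j]))"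
    by (subst sum_rotate3) (intro sum.cong refl sum_rotate3)
  finally show ?thesis
    unfolding tinner_def by (simp add: sum_distrib_left ac_simps)
qed

text \<open>The algebra behind the Leibniz rule: a connection term acting on one slot of \<open>A\<close> can be
  moved onto the metric factor \<open>M\<close> of that slot.\<close>
lemma contract_slot_left:
  fixes M \<Gamma> :: "'n::finite \<Rightarrow> 'n \<Rightarrow> real" and A B :: "'n list \<Rightarrow> real"
  assumes u: "u < q" and M_sym: "\<And>a b. M a b = M b a"
  shows "(\<Sum>I\<in>tuples q. \<Sum>K\<in>tuples q. (\<Prod>w<q. M (I!w) (K!w)) * (\<Sum>a\<in>UNIV. \<Gamma> a (I!u) * A (I[u:=a])) * B K)
       = (\<Sum>I\<in>tuples q. \<Sum>K\<in>tuples q.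
            (\<Sum>c\<in>UNIV. M (K!u) c * \<Gamma> (I!u) c) * (\<Prod>w\<in>{..<q}-{u}. M (I!w) (K!w)) * A I * B K)"
proof -
  define h where "h = (\<lambda>K I J. (\<Prod>w<q. M (I!w) (K!w)) * \<Gamma> (J!u) (I!u) * A J * B K)"
  have "(\<Sum>I\<in>tuples q. \<Sum>K\<in>tuples q. (\<Prod>w<q. M (I!w) (K!w)) * (\<Sum>a\<in>UNIV. \<Gamma> a (I!u) * A (I[u:=a])) * B K)
      = (\<Sum>I\<in>tuples q. \<Sum>K\<in>tuples q. \<Sum>a\<in>UNIV. h K I (I[u:=a]))"
    unfolding h_def using u
    by (intro sum.cong refl) (simp add: tuples_def sum_distrib_left sum_distrib_right mult.assoc)
  also have "\<dots> = (\<Sum>K\<in>tuples q. \<Sum>I\<in>tuples q. \<Sum>a\<in>UNIV. h K I (I[u:=a]))"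
    by (rule sum.swap)
  also have "\<dots> = (\<Sum>K\<in>tuples q. \<Sum>J\<in>tuples q. \<Sum>b\<in>UNIV. h K (J[u:=b]) J)"
    by (intro sum.cong refl sum_tuples_update_swap u)
  also have "\<dots> = (\<Sum>K\<in>tuples q. \<Sum>J\<in>tuples q.
      (\<Sum>c\<in>UNIV. M (K!u) c * \<Gamma> (J!u) c) * (\<Prod>w\<in>{..<q}-{u}. M (J!w) (K!w)) * A J * B K)"
  proof (intro sum.cong refl)
    fix K J :: "'n list" assume "J \<in> tuples q"
    then have l: "length J = q" by (simp add: tuples_def)
    show "(\<Sum>b\<in>UNIV. h K (J[u:=b]) J) =
        (\<Sum>c\<in>UNIV. M (K!u) c * \<Gamma> (J!u) c) * (\<Prod>w\<in>{..<q}-{u}. M (J!w) (K!w)) * A J * B K"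
      unfolding h_def prod_update_nth[OF l u] using l u
      by (simp add: sum_distrib_left sum_distrib_right M_sym[of _ "K!u"] ac_simps)
  qed
  also have "\<dots> = (\<Sum>I\<in>tuples q. \<Sum>K\<in>tuples q.
      (\<Sum>c\<in>UNIV. M (K!u) c * \<Gamma> (I!u) c) * (\<Prod>w\<in>{..<q}-{u}. M (I!w) (K!w)) * A I * B K)"
    by (rule sum.swap)
  finally show ?thesis .
qed

lemma contract_slots_left:
  fixes M \<Gamma> :: "'n::finite \<Rightarrow> 'n \<Rightarrow> real" and A B :: "'n list \<Rightarrow> real"
  assumes M_sym: "\<And>a b. M a b = M b a"
  shows "(\<Sum>I\<in>tuples q. \<Sum>K\<in>tuples q.
            (\<Prod>w<q. M (I!w) (K!w)) * (\<Sum>u<q. \<Sum>a\<in>UNIV. \<Gamma> a (I!u) * A (I[u:=a])) * B K)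
       = (\<Sum>u<q. \<Sum>I\<in>tuples q. \<Sum>K\<in>tuples q.
            (\<Sum>c\<in>UNIV. M (K!u) c * \<Gamma> (I!u) c) * (\<Prod>w\<in>{..<q}-{u}. M (I!w) (K!w)) * A I * B K)"
proof -
  have "(\<Sum>I\<in>tuples q. \<Sum>K\<in>tuples q.
            (\<Prod>w<q. M (I!w) (K!w)) * (\<Sum>u<q. \<Sum>a\<in>UNIV. \<Gamma> a (I!u) * A (I[u:=a])) * B K)
      = (\<Sum>u<q. \<Sum>I\<in>tuples q. \<Sum>K\<in>tuples q.
            (\<Prod>w<q. M (I!w) (K!w)) * (\<Sum>a\<in>UNIV. \<Gamma> a (I!u) * A (I[u:=a])) * B K)"
    by (simp add: sum_distrib_left sum_distrib_right) (rule sum_rotate3)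
  also have "\<dots> = (\<Sum>u<q. \<Sum>I\<in>tuples q. \<Sum>K\<in>tuples q.
            (\<Sum>c\<in>UNIV. M (K!u) c * \<Gamma> (I!u) c) * (\<Prod>w\<in>{..<q}-{u}. M (I!w) (K!w)) * A I * B K)"
    by (intro sum.cong refl contract_slot_left M_sym) simp
  finally show ?thesis .
qed

lemma contract_slots_right:
  fixes M \<Gamma> :: "'n::finite \<Rightarrow> 'n \<Rightarrow> real" and A B :: "'n list \<Rightarrow> real"
  assumes M_sym: "\<And>a b. M a b = M b a"
  shows "(\<Sum>I\<in>tuples q. \<Sum>K\<in>tuples q.
            (\<Prod>w<q. M (I!w) (K!w)) * A I * (\<Sum>u<q. \<Sum>a\<in>UNIV. \<Gamma> a (K!u) * B (K[u:=a])))
       = (\<Sum>u<q. \<Sum>I\<in>tuples q. \<Sum>K\<in>tuples q.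
            (\<Sum>c\<in>UNIV. M (I!u) c * \<Gamma> (K!u) c) * (\<Prod>w\<in>{..<q}-{u}. M (I!w) (K!w)) * A I * B K)"
proof -
  have "(\<Sum>I\<in>tuples q. \<Sum>K\<in>tuples q.
            (\<Prod>w<q. M (I!w) (K!w)) * A I * (\<Sum>u<q. \<Sum>a\<in>UNIV. \<Gamma> a (K!u) * B (K[u:=a])))
      = (\<Sum>K\<in>tuples q. \<Sum>I\<in>tuples q.
            (\<Prod>w<q. M (K!w) (I!w)) * (\<Sum>u<q. \<Sum>a\<in>UNIV. \<Gamma> a (K!u) * B (K[u:=a])) * A I)"
    by (subst sum.swap) (simp add: M_sym ac_simps)
  also have "\<dots> = (\<Sum>u<q. \<Sum>K\<in>tuples q. \<Sum>I\<in>tuples q.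
            (\<Sum>c\<in>UNIV. M (I!u) c * \<Gamma> (K!u) c) * (\<Prod>w\<in>{..<q}-{u}. M (K!w) (I!w)) * B K * A I)"
    by (rule contract_slots_left[OF M_sym])
  also have "\<dots> = (\<Sum>u<q. \<Sum>I\<in>tuples q. \<Sum>K\<in>tuples q.
            (\<Sum>c\<in>UNIV. M (I!u) c * \<Gamma> (K!u) c) * (\<Prod>w\<in>{..<q}-{u}. M (I!w) (K!w)) * A I * B K)"
    by (rule sum.cong[OF refl], subst sum.swap) (simp add: M_sym ac_simps)
  finally show ?thesis .
qed

lemma contraction_has_derivative:
  fixes M :: "real \<Rightarrow> 'n::finite \<Rightarrow> 'n \<Rightarrow> real" and A B :: "real \<Rightarrow> 'n list \<Rightarrow> real"
  assumes dM: "\<And>a b. ((\<lambda>s. M s a b) has_real_derivative dM a b) (at t within S)"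
    and dA: "\<And>I. I \<in> tuples q \<Longrightarrow> ((\<lambda>s. A s I) has_real_derivative dA I) (at t within S)"
    and dB: "\<And>K. K \<in> tuples q \<Longrightarrow> ((\<lambda>s. B s K) has_real_derivative dB K) (at t within S)"
  shows "((\<lambda>s. \<Sum>I\<in>tuples q. \<Sum>K\<in>tuples q. (\<Prod>w<q. M s (I!w) (K!w)) * A s I * B s K)
          has_real_derivative
          (\<Sum>I\<in>tuples q. \<Sum>K\<in>tuples q.
              (\<Sum>u<q. dM (I!u) (K!u) * (\<Prod>w\<in>{..<q}-{u}. M t (I!w) (K!w))) * A t I * B t K
            + (\<Prod>w<q. M t (I!w) (K!w)) * dA I * B t K + (\<Prod>w<q. M t (I!w) (K!w)) * A t I * dB K))
         (at t within S)"
proof (intro DERIV_sum)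
  fix I K :: "'n list" assume I: "I \<in> tuples q" and K: "K \<in> tuples q"
  have "((\<lambda>s. \<Prod>w<q. M s (I!w) (K!w)) has_real_derivative
          (\<Sum>u<q. dM (I!u) (K!u) * (\<Prod>w\<in>{..<q}-{u}. M t (I!w) (K!w)))) (at t within S)"
    by (rule has_field_derivative_prod_within) (rule dM)
  from DERIV_mult[OF DERIV_mult[OF this dA[OF I]] dB[OF K]]
  show "((\<lambda>s. (\<Prod>w<q. M s (I!w) (K!w)) * A s I * B s K) has_real_derivative
          (\<Sum>u<q. dM (I!u) (K!u) * (\<Prod>w\<in>{..<q}-{u}. M t (I!w) (K!w))) * A t I * B t K
            + (\<Prod>w<q. M t (I!w) (K!w)) * dA I * B t K + (\<Prod>w<q. M t (I!w) (K!w)) * A t I * dB K)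
         (at t within S)"
    by (simp add: algebra_simps)
qed

text \<open>
  If \<open>\<partial>M\<^sup>a\<^sup>b = - M\<^sup>a\<^sup>c \<Gamma>\<^sup>b\<^sub>c - M\<^sup>b\<^sup>c \<Gamma>\<^sup>a\<^sub>c\<close>, the terms coming from differentiating \<open>M\<close>
  are exactly the connection terms of \<open>A\<close> and \<open>B\<close>.
\<close>
lemma contraction_derivative_eq_connection:
  fixes M \<Gamma> dM :: "'n::finite \<Rightarrow> 'n \<Rightarrow> real" and A B dA dB :: "'n list \<Rightarrow> real"
  assumes M_sym: "\<And>a b. M a b = M b a"
    and dM: "\<And>a b. dM a b = - (\<Sum>c\<in>UNIV. M a c * \<Gamma> b c + M b c * \<Gamma> a c)"
  shows "(\<Sum>I\<in>tuples q. \<Sum>K\<in>tuples q.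
            (\<Sum>u<q. dM (I!u) (K!u) * (\<Prod>w\<in>{..<q}-{u}. M (I!w) (K!w))) * A I * B K
          + (\<Prod>w<q. M (I!w) (K!w)) * dA I * B K + (\<Prod>w<q. M (I!w) (K!w)) * A I * dB K)
   = (\<Sum>I\<in>tuples q. \<Sum>K\<in>tuples q.
        (\<Prod>w<q. M (I!w) (K!w)) * (dA I - (\<Sum>u<q. \<Sum>a\<in>UNIV. \<Gamma> a (I!u) * A (I[u:=a]))) * B K)
   + (\<Sum>I\<in>tuples q. \<Sum>K\<in>tuples q.
        (\<Prod>w<q. M (I!w) (K!w)) * A I * (dB K - (\<Sum>u<q. \<Sum>a\<in>UNIV. \<Gamma> a (K!u) * B (K[u:=a]))))"
proof -
  let ?Pr = "\<lambda>u I K. \<Prod>w\<in>{..<q}-{u}. M (I!w) (K!w)"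
  have "(\<Sum>I\<in>tuples q. \<Sum>K\<in>tuples q. (\<Sum>u<q. dM (I!u) (K!u) * ?Pr u I K) * A I * B K)
      = (\<Sum>u<q. \<Sum>I\<in>tuples q. \<Sum>K\<in>tuples q. dM (I!u) (K!u) * ?Pr u I K * A I * B K)"
    by (simp add: sum_distrib_right) (rule sum_rotate3)
  also have "\<dots> = - (\<Sum>u<q. \<Sum>I\<in>tuples q. \<Sum>K\<in>tuples q.
          (\<Sum>c\<in>UNIV. M (K!u) c * \<Gamma> (I!u) c) * ?Pr u I K * A I * B K)
    - (\<Sum>u<q. \<Sum>I\<in>tuples q. \<Sum>K\<in>tuples q.
          (\<Sum>c\<in>UNIV. M (I!u) c * \<Gamma> (K!u) c) * ?Pr u I K * A I * B K)"
    unfolding sum_subtractf[symmetric] sum_negf[symmetric]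
    by (intro sum.cong refl) (simp add: dM sum.distrib sum_distrib_right algebra_simps)
  also have "\<dots> = - (\<Sum>I\<in>tuples q. \<Sum>K\<in>tuples q.
          (\<Prod>w<q. M (I!w) (K!w)) * (\<Sum>u<q. \<Sum>a\<in>UNIV. \<Gamma> a (I!u) * A (I[u:=a])) * B K)
    - (\<Sum>I\<in>tuples q. \<Sum>K\<in>tuples q.
          (\<Prod>w<q. M (I!w) (K!w)) * A I * (\<Sum>u<q. \<Sum>a\<in>UNIV. \<Gamma> a (K!u) * B (K[u:=a])))"
    using contract_slots_left[where M=M and q=q and \<Gamma>=\<Gamma> and A=A and B=B, OF M_sym]
      contract_slots_right[where M=M and q=q and \<Gamma>=\<Gamma> and A=A and B=B, OF M_sym]
    by simp
  finally show ?thesis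
    by (simp add: sum.distrib algebra_simps sum_subtractf)
qed

section \<open>Metric compatibility in a chart\<close>

lemma cov_snoc:
  "cov G A y (I @ [k]) = pd k (\<lambda>z. A z I) y - (\<Sum>u<length I. \<Sum>a\<in>UNIV. Chr G y a k (I!u) * A y (I[u:=a]))"
  by (simp add: cov_def Let_def)

lemma cov_cov_snoc:
  "cov G (cov G X) x (I @ [i, j]) =
     cov G (\<lambda>y I. cov G X y (I @ [i])) x (I @ [j]) - (\<Sum>a\<in>UNIV. Chr G x a j i * cov G X x (I @ [a]))"
proof -
  have "(\<Sum>u<length I. \<Sum>a\<in>UNIV. Chr G x a j ((I@[i])!u) * cov G X x ((I@[i])[u:=a]))
      = (\<Sum>u<length I. \<Sum>a\<in>UNIV. Chr G x a j (I!u) * cov G X x (I[u:=a] @ [i]))"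
    by (intro sum.cong refl) (simp add: nth_append list_update_append)
  then show ?thesis
    using cov_snoc[of G "cov G X" x "I @ [i]" j] by (simp add: cov_snoc list_update_append)
qed

locale metric_chart =
  fixes G :: "real^'n::finite \<Rightarrow> real^'n^'n" and U :: "(real^'n) set"
  assumes open_U: "open U"
    and G_sym: "\<And>y i j. y \<in> U \<Longrightarrow> G y $ i $ j = G y $ j $ i"
    and det_G_nonzero: "\<And>y. y \<in> U \<Longrightarrow> det (G y) \<noteq> 0"
    and G_differentiable:
      "\<And>y i j k. y \<in> U \<Longrightarrow> (\<lambda>h. G (y + h *\<^sub>R axis k (1::real)) $ i $ j) differentiable (at 0)"
    and pd_G_differentiable:
      "\<And>y i j k l. y \<in> U \<Longrightarrow> (\<lambda>h. pd k (\<lambda>z. G z $ i $ j) (y + h *\<^sub>R axis l 1)) differentiable (at 0)"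
begin

lemma ginv_sym: "y \<in> U \<Longrightarrow> ginv G y a b = ginv G y b a"
  unfolding ginv_def by (rule matrix_inv_symmetric[OF det_G_nonzero G_sym])

lemma pd_G_sym: "y \<in> U \<Longrightarrow> pd k (\<lambda>z. G z $ i $ j) y = pd k (\<lambda>z. G z $ j $ i) y"
  by (rule pd_cong_open[OF open_U]) (auto intro: G_sym)

text \<open>The symmetrised \<open>g\<^sup>a\<^sup>c \<Gamma>\<^sup>b\<^sub>k\<^sub>c\<close> is \<open>g\<^sup>a\<^sup>c (\<partial>\<^sub>k g\<^sub>c\<^sub>m) g\<^sup>m\<^sup>b\<close>: the other two derivatives in the
  Christoffel symbols cancel.\<close>
lemma ginv_Chr_symmetrised:
  assumes y: "y \<in> U"
  shows "(\<Sum>c\<in>UNIV. ginv G y a c * Chr G y b k c + ginv G y b c * Chr G y a k c)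
       = (\<Sum>c\<in>UNIV. \<Sum>m\<in>UNIV. ginv G y a c * pd k (\<lambda>z. G z $ c $ m) y * ginv G y m b)"
proof -
  let ?M = "ginv G y"
  let ?D = "\<lambda>i j. pd k (\<lambda>z. G z $ i $ j) y"
  let ?S = "\<lambda>m c. ?D m c + pd c (\<lambda>z. G z $ m $ k) y - pd m (\<lambda>z. G z $ k $ c) y"
  have "(\<Sum>c\<in>UNIV. ?M a c * Chr G y b k c + ?M b c * Chr G y a k c)
      = (\<Sum>c\<in>UNIV. \<Sum>m\<in>UNIV. (1/2) * (?M a c * ?M b m * ?S m c))
      + (\<Sum>c\<in>UNIV. \<Sum>m\<in>UNIV. (1/2) * (?M b c * ?M a m * ?S m c))"
    unfolding sum.distrib Chr_def by (simp add: sum_distrib_left algebra_simps)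
  also have "\<dots> = (\<Sum>c\<in>UNIV. \<Sum>m\<in>UNIV. (1/2) * (?M a c * ?M b m * ?S m c))
      + (\<Sum>c\<in>UNIV. \<Sum>m\<in>UNIV. (1/2) * (?M b m * ?M a c * ?S c m))"
    by (subst (2) sum.swap) (rule refl)
  also have "\<dots> = (\<Sum>c\<in>UNIV. \<Sum>m\<in>UNIV. ?M a c * ?D c m * ?M m b)"
    unfolding sum.distrib[symmetric]
  proof (intro sum.cong refl)
    fix c m
    show "(1/2) * (?M a c * ?M b m * ?S m c) + (1/2) * (?M b m * ?M a c * ?S c m) = ?M a c * ?D c m * ?M m b"
      using pd_G_sym[OF y, of k m c] pd_G_sym[OF y, of c m k] pd_G_sym[OF y, of m c k] ginv_sym[OF y, of m b]
      by (simp add: algebra_simps)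
  qed
  finally show ?thesis .
qed

lemma ginv_has_derivative:
  assumes y: "y \<in> U"
  shows "((\<lambda>h. ginv G (y + h *\<^sub>R axis k (1::real)) a b) has_real_derivative
     - (\<Sum>c\<in>UNIV. ginv G y a c * Chr G y b k c + ginv G y b c * Chr G y a k c)) (at 0)"
proof -
  have "((\<lambda>h. G (y + h *\<^sub>R axis k (1::real)) $ i $ j) has_real_derivative pd k (\<lambda>z. G z $ i $ j) y) (at 0)"
    for i j
    by (rule pd_has_real_derivative) (rule G_differentiable[OF y])
  from matrix_inv_has_derivative[where G="\<lambda>h. G (y + h *\<^sub>R axis k (1::real))", OF this]
  have "((\<lambda>h. ginv G (y + h *\<^sub>R axis k (1::real)) a b) has_real_derivative
     - (\<Sum>c\<in>UNIV. \<Sum>m\<in>UNIV. ginv G y a c * pd k (\<lambda>z. G z $ c $ m) y * ginv G y m b)) (at 0)"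
    unfolding ginv_def using det_G_nonzero[OF y] by simp
  then show ?thesis
    unfolding ginv_Chr_symmetrised[OF y] .
qed

lemma ginv_differentiable: "y \<in> U \<Longrightarrow> (\<lambda>h. ginv G (y + h *\<^sub>R axis k (1::real)) a b) differentiable (at 0)"
  using ginv_has_derivative unfolding real_differentiable_def by blast

lemma Chr_differentiable: "y \<in> U \<Longrightarrow> (\<lambda>h. Chr G (y + h *\<^sub>R axis k (1::real)) l i j) differentiable (at 0)"
  unfolding Chr_def
  by (intro differentiable_mult differentiable_const differentiable_sum ballI finite_class.finite
      differentiable_add differentiable_diff ginv_differentiable pd_G_differentiable)

lemma pd_tinner:
  assumes y: "y \<in> U"
    and dA: "\<And>I. (\<lambda>h. A (y + h *\<^sub>R axis k (1::real)) I) differentiable (at 0)"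
    and dB: "\<And>K. (\<lambda>h. B (y + h *\<^sub>R axis k (1::real)) K) differentiable (at 0)"
  shows "((\<lambda>h. tinner G (y + h *\<^sub>R axis k 1) q (A (y + h *\<^sub>R axis k 1)) (B (y + h *\<^sub>R axis k 1)))
          has_real_derivative
          tinner G y q (\<lambda>I. cov G A y (I @ [k])) (B y) + tinner G y q (A y) (\<lambda>K. cov G B y (K @ [k])))
         (at 0)"
proof -
  define dM where "dM = (\<lambda>a b. - (\<Sum>c\<in>UNIV. ginv G y a c * Chr G y b k c + ginv G y b c * Chr G y a k c))"
  have main: "((\<lambda>h. tinner G (y + h *\<^sub>R axis k 1) q (A (y + h *\<^sub>R axis k 1)) (B (y + h *\<^sub>R axis k 1)))
       has_real_derivative
       (\<Sum>I\<in>tuples q. \<Sum>K\<in>tuples q.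
            (\<Sum>u<q. dM (I!u) (K!u) * (\<Prod>w\<in>{..<q}-{u}. ginv G y (I!w) (K!w))) * A y I * B y K
          + (\<Prod>w<q. ginv G y (I!w) (K!w)) * pd k (\<lambda>z. A z I) y * B y K
          + (\<Prod>w<q. ginv G y (I!w) (K!w)) * A y I * pd k (\<lambda>z. B z K) y)) (at 0)"
    using contraction_has_derivative[where M="\<lambda>h. ginv G (y + h *\<^sub>R axis k 1)" and t=0 and S=UNIV
        and A="\<lambda>h. A (y + h *\<^sub>R axis k 1)" and B="\<lambda>h. B (y + h *\<^sub>R axis k 1)",
        OF ginv_has_derivative[OF y] pd_has_real_derivative[OF dA] pd_has_real_derivative[OF dB]]
    unfolding tinner_def dM_def by simp
  have "tinner G y q (\<lambda>I. cov G A y (I @ [k])) (B y) + tinner G y q (A y) (\<lambda>K. cov G B y (K @ [k])) =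
     (\<Sum>I\<in>tuples q. \<Sum>K\<in>tuples q. (\<Prod>w<q. ginv G y (I!w) (K!w)) *
        (pd k (\<lambda>z. A z I) y - (\<Sum>u<q. \<Sum>a\<in>UNIV. Chr G y a k (I!u) * A y (I[u:=a]))) * B y K)
   + (\<Sum>I\<in>tuples q. \<Sum>K\<in>tuples q. (\<Prod>w<q. ginv G y (I!w) (K!w)) * A y I *
        (pd k (\<lambda>z. B z K) y - (\<Sum>u<q. \<Sum>a\<in>UNIV. Chr G y a k (K!u) * B y (K[u:=a]))))"
    unfolding tinner_def by (intro arg_cong2[where f="(+)"] sum.cong refl) (simp_all add: cov_snoc tuples_def)
  also have "\<dots> = (\<Sum>I\<in>tuples q. \<Sum>K\<in>tuples q.
            (\<Sum>u<q. dM (I!u) (K!u) * (\<Prod>w\<in>{..<q}-{u}. ginv G y (I!w) (K!w))) * A y I * B y K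
          + (\<Prod>w<q. ginv G y (I!w) (K!w)) * pd k (\<lambda>z. A z I) y * B y K
          + (\<Prod>w<q. ginv G y (I!w) (K!w)) * A y I * pd k (\<lambda>z. B z K) y)"
    by (rule contraction_derivative_eq_connection[symmetric]) (simp_all add: dM_def ginv_sym[OF y])
  finally show ?thesis using main by simp
qed

lemma pd_tinner_self:
  assumes y: "y \<in> U" and dX: "\<And>I. (\<lambda>h. X (y + h *\<^sub>R axis k (1::real)) I) differentiable (at 0)"
  shows "pd k (\<lambda>y. tinner G y p (X y) (X y)) y = 2 * tinner G y p (\<lambda>I. cov G X y (I @ [k])) (X y)"
proof -
  have "pd k (\<lambda>y. tinner G y p (X y) (X y)) y
      = tinner G y p (\<lambda>I. cov G X y (I @ [k])) (X y) + tinner G y p (X y) (\<lambda>I. cov G X y (I @ [k]))"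
    by (rule pd_eqI, rule pd_tinner[OF y dX dX])
  then show ?thesis
    using tinner_commute[OF ginv_sym[OF y]] by simp
qed

lemma lap_tinner:
  assumes x: "x \<in> U"
    and dX: "\<And>y I k. y \<in> U \<Longrightarrow> (\<lambda>h. X (y + h *\<^sub>R axis k (1::real)) I) differentiable (at 0)"
    and ddX: "\<And>y I k l. y \<in> U \<Longrightarrow> (\<lambda>h. pd k (\<lambda>z. X z I) (y + h *\<^sub>R axis l (1::real))) differentiable (at 0)"
  shows "lap G (\<lambda>y. tinner G y p (X y) (X y)) x =
     2 * tinner G x p (\<lambda>I. \<Sum>j\<in>UNIV. \<Sum>k\<in>UNIV. ginv G x j k * cov G (cov G X) x (I @ [j, k])) (X x)
     + 2 * tinner G x (Suc p) (cov G X x) (cov G X x)"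
proof -
  define f where "f = (\<lambda>y. tinner G y p (X y) (X y))"
  define Xi where "Xi = (\<lambda>i y I. cov G X y (I @ [i]))"
  have dXi: "(\<lambda>h. Xi i (x + h *\<^sub>R axis j (1::real)) I) differentiable (at 0)" for i j I
    unfolding Xi_def cov_snoc
    by (intro differentiable_diff differentiable_sum differentiable_mult ballI finite_class.finite
        finite_lessThan ddX[OF x] Chr_differentiable[OF x] dX[OF x])
  have "pd j (\<lambda>y. pd i f y) x = pd j (\<lambda>y. 2 * tinner G y p (Xi i y) (X y)) x" for i j
    unfolding f_def Xi_def by (rule pd_cong_open[OF open_U x]) (simp add: pd_tinner_self dX)
  also have "\<dots> i j = 2 * (tinner G x p (\<lambda>I. cov G (Xi i) x (I @ [j])) (X x) + tinner G x p (Xi i x) (Xi j x))"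
    for i j unfolding Xi_def by (rule pd_eqI, rule DERIV_cmult, rule pd_tinner[OF x dXi[unfolded Xi_def] dX[OF x]])
  finally have pd_pd_f: "pd j (\<lambda>y. pd i f y) x = \<dots> i j" for i j .
  have pd_f: "pd a f x = 2 * tinner G x p (Xi a x) (X x)" for a
    unfolding f_def Xi_def by (rule pd_tinner_self[OF x dX[OF x]])
  have cov_cov_f: "cov G (cov G (\<lambda>y _. f y)) x [i, j] = pd j (\<lambda>y. pd i f y) x - (\<Sum>a\<in>UNIV. Chr G x a j i * pd a f x)"
    for i j by (simp add: cov_def Let_def)
  have tinner_cov_cov: "tinner G x p (\<lambda>I. cov G (cov G X) x (I @ [i, j])) (X x)
      = tinner G x p (\<lambda>I. cov G (Xi i) x (I @ [j])) (X x) - (\<Sum>a\<in>UNIV. Chr G x a j i * tinner G x p (Xi a x) (X x))"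
    for i j unfolding cov_cov_snoc Xi_def by (simp add: tinner_diff_left tinner_sum_left tinner_scale_left)
  have "cov G (cov G (\<lambda>y _. f y)) x [i, j] =
      2 * tinner G x p (\<lambda>I. cov G (cov G X) x (I @ [i, j])) (X x) + 2 * tinner G x p (Xi i x) (Xi j x)" for i j
    unfolding cov_cov_f pd_pd_f pd_f tinner_cov_cov by (simp add: sum_distrib_left algebra_simps)
  then have "lap G f x = 2 * (\<Sum>i\<in>UNIV. \<Sum>j\<in>UNIV. ginv G x i j * tinner G x p (\<lambda>I. cov G (cov G X) x (I @ [i, j])) (X x))
      + 2 * (\<Sum>i\<in>UNIV. \<Sum>j\<in>UNIV. ginv G x i j * tinner G x p (Xi i x) (Xi j x))"
    unfolding lap_def by (simp add: sum_distrib_left sum.distrib algebra_simps)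
  then show ?thesis
    unfolding f_def Xi_def tinner_Suc
    by (simp add: tinner_sum_left tinner_scale_left)
qed

end

section \<open>Antisymmetric tensors and the curvature term\<close>

definition list_swap :: "nat \<Rightarrow> nat \<Rightarrow> 'a list \<Rightarrow> 'a list" where
  "list_swap a b L = L[a := L!b, b := L!a]"

lemma length_list_swap [simp]: "length (list_swap a b L) = length L"
  by (simp add: list_swap_def)

lemma nth_list_swap:
  "a < length L \<Longrightarrow> b < length L \<Longrightarrow> a \<noteq> b \<Longrightarrow> w < length L \<Longrightarrow>
     list_swap a b L ! w = (if w = a then L!b else if w = b then L!a else L!w)"
  by (simp add: list_swap_def nth_list_update)

lemma list_swap_involutive:
  "a < length L \<Longrightarrow> b < length L \<Longrightarrow> a \<noteq> b \<Longrightarrow> list_swap a b (list_swap a b L) = L"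
  by (rule nth_equalityI) (auto simp: nth_list_swap)

lemma sum_tuples_list_swap:
  assumes "a < p" "b < p" "a \<noteq> b"
  shows "(\<Sum>I\<in>tuples p. f I) = (\<Sum>I\<in>tuples p. (f (list_swap a b I) :: 'a::comm_monoid_add))"
  by (rule sum.reindex_bij_witness[where i="list_swap a b" and j="list_swap a b"])
     (use assms in \<open>auto simp: tuples_def list_swap_involutive\<close>)

lemma prod_list_swap:
  assumes "a < p" "b < p" "a \<noteq> b" "length I = p" "length K = p"
  shows "(\<Prod>w<p. M (list_swap a b I ! w) (list_swap a b K ! w)) = (\<Prod>w<p. (M (I!w) (K!w) :: real))"
proof -
  define \<tau> where "\<tau> = (\<lambda>w. if w = a then b else if w = b then a else w)"
  have "(\<Prod>w<p. M (list_swap a b I ! w) (list_swap a b K ! w)) = (\<Prod>w<p. M (I ! \<tau> w) (K ! \<tau> w))"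
    by (rule prod.cong) (use assms in \<open>auto simp: nth_list_swap \<tau>_def\<close>)
  also have "\<dots> = (\<Prod>w<p. M (I!w) (K!w))"
    by (rule prod.reindex_bij_witness[where i=\<tau> and j=\<tau>]) (use assms in \<open>auto simp: \<tau>_def\<close>)
  finally show ?thesis .
qed

lemma contraction_antisym_swap:
  fixes M :: "'n::finite \<Rightarrow> 'n \<Rightarrow> real" and X \<Phi> \<Psi> :: "'n list \<Rightarrow> real"
  assumes ab: "a < b" "b < p"
    and \<Phi>: "\<And>I. length I = p \<Longrightarrow> \<Phi> (list_swap a b I) = - \<Psi> I"
    and X: "\<And>K. length K = p \<Longrightarrow> X (list_swap a b K) = - X K"
  shows "(\<Sum>I\<in>tuples p. \<Sum>K\<in>tuples p. (\<Prod>w<p. M (I!w) (K!w)) * \<Phi> I * X K)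
       = (\<Sum>I\<in>tuples p. \<Sum>K\<in>tuples p. (\<Prod>w<p. M (I!w) (K!w)) * \<Psi> I * X K)"
proof -
  have a: "a < p" "a \<noteq> b" using ab by auto
  have "(\<Sum>I\<in>tuples p. \<Sum>K\<in>tuples p. (\<Prod>w<p. M (I!w) (K!w)) * \<Phi> I * X K)
      = (\<Sum>I\<in>tuples p. \<Sum>K\<in>tuples p. (\<Prod>w<p. M (I!w) (list_swap a b K ! w)) * \<Phi> I * X (list_swap a b K))"
    by (rule sum.cong[OF refl], rule sum_tuples_list_swap[OF a(1) ab(2) a(2)])
  also have "\<dots> = (\<Sum>I\<in>tuples p. \<Sum>K\<in>tuples p.
      (\<Prod>w<p. M (list_swap a b I ! w) (list_swap a b K ! w)) * \<Phi> (list_swap a b I) * X (list_swap a b K))"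
    by (rule sum_tuples_list_swap[OF a(1) ab(2) a(2)])
  also have "\<dots> = (\<Sum>I\<in>tuples p. \<Sum>K\<in>tuples p. (\<Prod>w<p. M (I!w) (K!w)) * \<Psi> I * X K)"
  proof (intro sum.cong refl)
    fix I K :: "'n list" assume "I \<in> tuples p" "K \<in> tuples p"
    then have l: "length I = p" "length K = p" by (auto simp: tuples_def)
    show "(\<Prod>w<p. M (list_swap a b I ! w) (list_swap a b K ! w)) * \<Phi> (list_swap a b I) * X (list_swap a b K)
        = (\<Prod>w<p. M (I!w) (K!w)) * \<Psi> I * X K"
      using prod_list_swap[OF a(1) ab(2) a(2) l, of M] \<Phi>[OF l(1)] X[OF l(2)] by simp
  qed
  finally show ?thesis .
qed

lemma list_swap_update_0:
  assumes "0 < s" "s < r" "r < length I"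
  shows "(list_swap 0 s I)[s := \<alpha>, r := \<beta>] = list_swap 0 s (I[0 := \<alpha>, r := \<beta>])"
    "list_swap 0 s I ! s = I ! 0" "list_swap 0 s I ! r = I ! r"
proof -
  have l: "0 < length I" "s < length I" using assms by auto
  show "(list_swap 0 s I)[s := \<alpha>, r := \<beta>] = list_swap 0 s (I[0 := \<alpha>, r := \<beta>])"
    unfolding list_eq_iff_nth_eq using assms l by (auto simp: list_swap_def nth_list_update)
  show "list_swap 0 s I ! s = I ! 0" "list_swap 0 s I ! r = I ! r"
    using assms l by (auto simp: list_swap_def nth_list_update)
qed

lemma list_swap_update_1:
  assumes "1 < r" "r < length I"
  shows "(list_swap 1 r I)[0 := \<alpha>, r := \<beta>] = list_swap 1 r (I[0 := \<alpha>, 1 := \<beta>])"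
    "list_swap 1 r I ! 0 = I ! 0" "list_swap 1 r I ! r = I ! 1"
proof -
  have l: "0 < length I" "1 < length I" using assms by auto
  show "(list_swap 1 r I)[0 := \<alpha>, r := \<beta>] = list_swap 1 r (I[0 := \<alpha>, 1 := \<beta>])"
    unfolding list_eq_iff_nth_eq using assms l by (auto simp: list_swap_def nth_list_update)
  show "list_swap 1 r I ! 0 = I ! 0" "list_swap 1 r I ! r = I ! 1"
    using assms l by (auto simp: list_swap_def nth_list_update)
qed

text \<open>The \<open>(s, r)\<close> summand of the curvature term of \<open>\<Delta>\<^sub>d X\<close>, paired with \<open>X\<close>.\<close>
definition slot_pair_contraction ::
  "('n::finite \<Rightarrow> 'n \<Rightarrow> real) \<Rightarrow> ('n list \<Rightarrow> real) \<Rightarrow> ('n \<Rightarrow> 'n \<Rightarrow> 'n \<Rightarrow> 'n \<Rightarrow> real) \<Rightarrow> nat \<Rightarrow> nat \<Rightarrow> nat \<Rightarrow> real"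
  where
  "slot_pair_contraction M X Rm p s r = (\<Sum>I\<in>tuples p. \<Sum>K\<in>tuples p. (\<Prod>w<p. M (I!w) (K!w)) *
      (\<Sum>a\<in>UNIV. \<Sum>b\<in>UNIV. X (I[s := a, r := b]) * Rm a b (I!s) (I!r)) * X K)"

text \<open>Moving the pair \<open>(s, r)\<close> to \<open>(0, r)\<close> and then to \<open>(0, 1)\<close> costs two sign changes in
  each of \<open>X\<close> and \<open>X[s := a, r := b]\<close>.\<close>
lemma slot_pair_contraction_eq_0_1:
  fixes M :: "'n::finite \<Rightarrow> 'n \<Rightarrow> real" and X :: "'n list \<Rightarrow> real"
  assumes anti: "\<And>J a b. length J = p \<Longrightarrow> a < b \<Longrightarrow> b < p \<Longrightarrow> X (list_swap a b J) = - X J"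
    and sr: "s < r" "r < p"
  shows "slot_pair_contraction M X Rm p s r = slot_pair_contraction M X Rm p 0 1"
proof -
  have to_0: "slot_pair_contraction M X Rm p s r = slot_pair_contraction M X Rm p 0 r" if s0: "0 < s"
    unfolding slot_pair_contraction_def
  proof (rule contraction_antisym_swap[of 0 s p])
    show "0 < s" "s < p" using s0 sr by auto
    show "X (list_swap 0 s K) = - X K" if "length K = p" for K
      using anti[OF that, of 0 s] s0 sr by simp
    fix I :: "'n list" assume "length I = p"
    then show "(\<Sum>a\<in>UNIV. \<Sum>b\<in>UNIV. X ((list_swap 0 s I)[s := a, r := b]) *
                 Rm a b (list_swap 0 s I ! s) (list_swap 0 s I ! r))
        = - (\<Sum>a\<in>UNIV. \<Sum>b\<in>UNIV. X (I[0 := a, r := b]) * Rm a b (I ! 0) (I ! r))"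
      using list_swap_update_0[OF s0 sr(1), of I] sr anti[of _ 0 s] s0 by (simp add: sum_negf)
  qed
  have to_1: "slot_pair_contraction M X Rm p 0 r = slot_pair_contraction M X Rm p 0 1" if r1: "1 < r"
    unfolding slot_pair_contraction_def
  proof (rule contraction_antisym_swap[of 1 r p])
    show "1 < r" "r < p" using r1 sr by auto
    show "X (list_swap 1 r K) = - X K" if "length K = p" for K
      using anti[OF that, of 1 r] r1 sr by simp
    fix I :: "'n list" assume "length I = p"
    then show "(\<Sum>a\<in>UNIV. \<Sum>b\<in>UNIV. X ((list_swap 1 r I)[0 := a, r := b]) *
                 Rm a b (list_swap 1 r I ! 0) (list_swap 1 r I ! r))
        = - (\<Sum>a\<in>UNIV. \<Sum>b\<in>UNIV. X (I[0 := a, 1 := b]) * Rm a b (I ! 0) (I ! 1))"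
      using list_swap_update_1[OF r1, of I] sr anti[of _ 1 r] r1 by (simp add: sum_negf)
  qed
  show ?thesis
    using sr to_0 to_1 by (cases "s = 0"; cases "r = 1") auto
qed

lemma slot_pair_contraction_0_1:
  fixes M :: "'n::finite \<Rightarrow> 'n \<Rightarrow> real" and X :: "'n list \<Rightarrow> real"
  shows "slot_pair_contraction M X Rm (Suc (Suc q)) 0 1
   = (\<Sum>i\<in>UNIV. \<Sum>j\<in>UNIV. \<Sum>k\<in>UNIV. \<Sum>l\<in>UNIV. \<Sum>k2\<in>UNIV. \<Sum>l2\<in>UNIV.
      \<Sum>J\<in>tuples q. \<Sum>K\<in>tuples q.
        X ([i, j] @ J) * Rm i j k l * M k k2 * M l l2 * (\<Prod>s<q. M (J ! s) (K ! s)) * X ([k2, l2] @ K))"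
proof -
  let ?P = "\<lambda>J K. \<Prod>s<q. M (J ! s) (K ! s)"
  have "slot_pair_contraction M X Rm (Suc (Suc q)) 0 1
     = (\<Sum>i\<in>UNIV. \<Sum>j\<in>UNIV. \<Sum>J\<in>tuples q. \<Sum>k\<in>UNIV. \<Sum>l\<in>UNIV. \<Sum>K\<in>tuples q. \<Sum>a\<in>UNIV. \<Sum>b\<in>UNIV.
          X (a # b # J) * Rm a b i j * M i k * M j l * ?P J K * X (k # l # K))"
    unfolding slot_pair_contraction_def sum_tuples_Cons
    by (simp del: prod.lessThan_Suc add: prod.lessThan_Suc_shift sum_distrib_left sum_distrib_right ac_simps)
  also have "\<dots> = (\<Sum>(i,j,J,k,l,K,a,b)\<in>UNIV \<times> UNIV \<times> tuples q \<times> UNIV \<times> UNIV \<times> tuples q \<times> UNIV \<times> UNIV.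
          X (a # b # J) * Rm a b i j * M i k * M j l * ?P J K * X (k # l # K))"
    by (simp only: sum.cartesian_product)
  also have "\<dots> = (\<Sum>(a,b,i,j,k,l,J,K)\<in>UNIV \<times> UNIV \<times> UNIV \<times> UNIV \<times> UNIV \<times> UNIV \<times> tuples q \<times> tuples q.
          X (a # b # J) * Rm a b i j * M i k * M j l * ?P J K * X (k # l # K))"
    by (rule sum.reindex_bij_witness[where i="\<lambda>(a,b,i,j,k,l,J,K). (i,j,J,k,l,K,a,b)"
          and j="\<lambda>(i,j,J,k,l,K,a,b). (a,b,i,j,k,l,J,K)"]) auto
  also have "\<dots> = (\<Sum>i\<in>UNIV. \<Sum>j\<in>UNIV. \<Sum>k\<in>UNIV. \<Sum>l\<in>UNIV. \<Sum>k2\<in>UNIV. \<Sum>l2\<in>UNIV.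
      \<Sum>J\<in>tuples q. \<Sum>K\<in>tuples q.
        X (i # j # J) * Rm i j k l * M k k2 * M l l2 * ?P J K * X (k2 # l2 # K))"
    by (simp only: sum.cartesian_product)
  finally show ?thesis by simp
qed

lemma contraction_slot_pairs:
  fixes M :: "'n::finite \<Rightarrow> 'n \<Rightarrow> real" and X :: "'n list \<Rightarrow> real"
  shows "(\<Sum>I\<in>tuples p. \<Sum>K\<in>tuples p. (\<Prod>w<p. M (I!w) (K!w)) *
      (\<Sum>s<p. \<Sum>r\<in>{s<..<p}. \<Sum>a\<in>UNIV. \<Sum>b\<in>UNIV. X (I[s := a, r := b]) * Rm a b (I!s) (I!r)) * X K)
    = (\<Sum>s<p. \<Sum>r\<in>{s<..<p}. slot_pair_contraction M X Rm p s r)"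
proof -
  have "(\<Sum>I\<in>tuples p. \<Sum>K\<in>tuples p. (\<Prod>w<p. M (I!w) (K!w)) *
      (\<Sum>s<p. \<Sum>r\<in>{s<..<p}. \<Sum>a\<in>UNIV. \<Sum>b\<in>UNIV. X (I[s := a, r := b]) * Rm a b (I!s) (I!r)) * X K)
      = (\<Sum>s<p. \<Sum>I\<in>tuples p. \<Sum>K\<in>tuples p. \<Sum>r\<in>{s<..<p}. (\<Prod>w<p. M (I!w) (K!w)) *
          (\<Sum>a\<in>UNIV. \<Sum>b\<in>UNIV. X (I[s := a, r := b]) * Rm a b (I!s) (I!r)) * X K)"
    by (simp add: sum_distrib_left sum_distrib_right) (rule sum_rotate3)
  also have "\<dots> = (\<Sum>s<p. \<Sum>r\<in>{s<..<p}. slot_pair_contraction M X Rm p s r)"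
    unfolding slot_pair_contraction_def by (intro sum.cong refl sum_rotate3)
  finally show ?thesis .
qed

section \<open>Evolution of the norm\<close>

text \<open>The time derivative \<open>2 R\<^sup>a\<^sup>b\<close> of \<open>g\<^sup>a\<^sup>b\<close> reproduces the Ricci terms of \<open>\<Delta>\<^sub>d\<close>.\<close>
lemma contraction_ricci_terms:
  fixes X :: "'n::finite list \<Rightarrow> real"
  assumes M_sym: "\<And>a b. ginv G x a b = ginv G x b a"
  shows "(\<Sum>I\<in>tuples p. \<Sum>K\<in>tuples p.
      (\<Sum>u<p. (- (\<Sum>c\<in>UNIV. \<Sum>d\<in>UNIV. ginv G x (I!u) c * (- 2 * Ric G x c d) * ginv G x d (K!u)))
             * (\<Prod>w\<in>{..<p}-{u}. ginv G x (I!w) (K!w))) * X I * X K)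
    = 2 * tinner G x p (\<lambda>I. \<Sum>s<p. \<Sum>a\<in>UNIV. X (I[s := a]) * Ric_mixed G x a (I ! s)) X"
proof -
  let ?M = "ginv G x"
  let ?Pr = "\<lambda>u I K. \<Prod>w\<in>{..<p}-{u}. ?M (I!w) (K!w)"
  have ricci_raised: "- (\<Sum>c\<in>UNIV. \<Sum>d\<in>UNIV. ?M a c * (- 2 * Ric G x c d) * ?M d b)
      = 2 * (\<Sum>c\<in>UNIV. ?M b c * Ric_mixed G x a c)" for a b
  proof -
    have "- (\<Sum>c\<in>UNIV. \<Sum>d\<in>UNIV. ?M a c * (- 2 * Ric G x c d) * ?M d b)
        = 2 * (\<Sum>d\<in>UNIV. \<Sum>c\<in>UNIV. ?M a c * Ric G x c d * ?M d b)"
      by (subst sum.swap) (simp add: sum_distrib_left sum_negf[symmetric] algebra_simps)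
    then show ?thesis
      unfolding Ric_mixed_def by (simp add: sum_distrib_left ac_simps M_sym[of b])
  qed
  have "tinner G x p (\<lambda>I. \<Sum>s<p. \<Sum>a\<in>UNIV. X (I[s := a]) * Ric_mixed G x a (I ! s)) X
      = (\<Sum>s<p. \<Sum>I\<in>tuples p. \<Sum>K\<in>tuples p.
          (\<Sum>c\<in>UNIV. ?M (K!s) c * Ric_mixed G x (I!s) c) * ?Pr s I K * X I * X K)"
    unfolding tinner_def
    using contract_slots_left[where M="?M" and \<Gamma>="Ric_mixed G x" and A=X and B=X and q=p, OF M_sym]
    by (simp add: ac_simps)
  moreover have "(\<Sum>I\<in>tuples p. \<Sum>K\<in>tuples p.
      (\<Sum>u<p. (- (\<Sum>c\<in>UNIV. \<Sum>d\<in>UNIV. ?M (I!u) c * (- 2 * Ric G x c d) * ?M d (K!u))) * ?Pr u I K) * X I * X K)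
      = 2 * (\<Sum>s<p. \<Sum>I\<in>tuples p. \<Sum>K\<in>tuples p.
          (\<Sum>c\<in>UNIV. ?M (K!s) c * Ric_mixed G x (I!s) c) * ?Pr s I K * X I * X K)"
    unfolding ricci_raised
    by (simp add: sum_distrib_left sum_distrib_right ac_simps) (rule sum_rotate3)
  ultimately show ?thesis by simp
qed

lemma contraction_curvature_terms:
  fixes X :: "'n::finite list \<Rightarrow> real"
  assumes anti: "\<And>J a b. length J = p \<Longrightarrow> a < b \<Longrightarrow> b < p \<Longrightarrow> X (list_swap a b J) = - X J"
  shows "2 * tinner G x p (\<lambda>I. \<Sum>s<p. \<Sum>r\<in>{s<..<p}. \<Sum>a\<in>UNIV. \<Sum>b\<in>UNIV.
             X (I[s := a, r := b]) * Riem_uudd G x a b (I ! s) (I ! r)) X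
       = real p * (real p - 1) * curv_term G (\<lambda>_. X) p x"
proof -
  let ?C01 = "slot_pair_contraction (ginv G x) X (Riem_uudd G x) p 0 1"
  have "tinner G x p (\<lambda>I. \<Sum>s<p. \<Sum>r\<in>{s<..<p}. \<Sum>a\<in>UNIV. \<Sum>b\<in>UNIV.
             X (I[s := a, r := b]) * Riem_uudd G x a b (I ! s) (I ! r)) X
      = (\<Sum>s<p. \<Sum>r\<in>{s<..<p}. slot_pair_contraction (ginv G x) X (Riem_uudd G x) p s r)"
    unfolding tinner_def by (rule contraction_slot_pairs)
  also have "\<dots> = (\<Sum>s<p. \<Sum>r\<in>{s<..<p}. ?C01)"
    by (intro sum.cong refl slot_pair_contraction_eq_0_1 anti) auto
  also have "\<dots> = ?C01 * (real p * (real p - 1) / 2)"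
    by (rule sum_pairs_const)
  finally have pairs: "tinner G x p (\<lambda>I. \<Sum>s<p. \<Sum>r\<in>{s<..<p}. \<Sum>a\<in>UNIV. \<Sum>b\<in>UNIV.
             X (I[s := a, r := b]) * Riem_uudd G x a b (I ! s) (I ! r)) X = \<dots>" .
  show ?thesis
  proof (cases "p < 2")
    case True
    then have "p = 0 \<or> p = 1" by auto
    then show ?thesis using pairs by auto
  next
    case False
    then obtain q where q: "p = Suc (Suc q)" by (metis add_2_eq_Suc le_Suc_ex not_less)
    have "?C01 = curv_term G (\<lambda>_. X) p x"
      unfolding curv_term_def q slot_pair_contraction_0_1 by simp
    then show ?thesis using pairs by (simp add: algebra_simps)
  qed
qed

lemma contraction_hodge_lap:
  fixes G :: "real^'n::finite \<Rightarrow> real^'n^'n" and X :: "real^'n \<Rightarrow> 'n list \<Rightarrow> real"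
  assumes M_sym: "\<And>a b. ginv G x a b = ginv G x b a"
    and anti: "\<And>J a b. length J = p \<Longrightarrow> a < b \<Longrightarrow> b < p \<Longrightarrow> X x (list_swap a b J) = - X x J"
  shows "(\<Sum>I\<in>tuples p. \<Sum>K\<in>tuples p.
      (\<Sum>u<p. (- (\<Sum>c\<in>UNIV. \<Sum>d\<in>UNIV. ginv G x (I!u) c * (- 2 * Ric G x c d) * ginv G x d (K!u)))
             * (\<Prod>w\<in>{..<p}-{u}. ginv G x (I!w) (K!w))) * X x I * X x K
      + (\<Prod>w<p. ginv G x (I!w) (K!w)) * hodge_lap G X p x I * X x K
      + (\<Prod>w<p. ginv G x (I!w) (K!w)) * X x I * hodge_lap G X p x K)
    = 2 * tinner G x p (\<lambda>I. \<Sum>j\<in>UNIV. \<Sum>k\<in>UNIV. ginv G x j k * cov G (cov G X) x (I @ [j, k])) (X x)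
      - real p * (real p - 1) * curv_term G X p x"
proof -
  have curv: "curv_term G X p x = curv_term G (\<lambda>_. X x) p x"
    by (simp add: curv_term_def)
  have "tinner G x p (X x) (hodge_lap G X p x) = tinner G x p (hodge_lap G X p x) (X x)"
    by (rule tinner_commute[OF M_sym])
  then show ?thesis
    unfolding curv
    using contraction_ricci_terms[where X="X x", OF M_sym] contraction_curvature_terms[where G=G, OF anti]
    by (simp add: tinner_def[symmetric] sum.distrib hodge_lap_def[abs_def] tinner_diff_left)
qed

lemma normsq_has_derivative_heat:
  fixes g :: "real \<Rightarrow> real^'n::finite \<Rightarrow> real^'n^'n" and \<xi> :: "real \<Rightarrow> real^'n \<Rightarrow> 'n list \<Rightarrow> real"
  assumes M_sym: "\<And>a b. ginv (g t) x a b = ginv (g t) x b a"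
    and dginv: "\<And>a b. ((\<lambda>s. ginv (g s) x a b) has_real_derivative
          - (\<Sum>c\<in>UNIV. \<Sum>d\<in>UNIV. ginv (g t) x a c * (- 2 * Ric (g t) x c d) * ginv (g t) x d b))
          (at t within S)"
    and heat: "\<And>I. length I = p \<Longrightarrow>
          ((\<lambda>s. \<xi> s x I) has_real_derivative hodge_lap (g t) (\<xi> t) p x I) (at t within S)"
    and anti: "\<And>J a b. length J = p \<Longrightarrow> a < b \<Longrightarrow> b < p \<Longrightarrow> \<xi> t x (list_swap a b J) = - \<xi> t x J"
  shows "((\<lambda>s. normsq (g s) (\<xi> s) p x) has_real_derivative
     2 * tinner (g t) x p
        (\<lambda>I. \<Sum>j\<in>UNIV. \<Sum>k\<in>UNIV. ginv (g t) x j k * cov (g t) (cov (g t) (\<xi> t)) x (I @ [j, k])) (\<xi> t x)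
      - real p * (real p - 1) * curv_term (g t) (\<xi> t) p x) (at t within S)"
proof (rule DERIV_cong)
  show "((\<lambda>s. normsq (g s) (\<xi> s) p x) has_real_derivative
     (\<Sum>I\<in>tuples p. \<Sum>K\<in>tuples p.
      (\<Sum>u<p. (- (\<Sum>c\<in>UNIV. \<Sum>d\<in>UNIV. ginv (g t) x (I!u) c * (- 2 * Ric (g t) x c d) * ginv (g t) x d (K!u)))
             * (\<Prod>w\<in>{..<p}-{u}. ginv (g t) x (I!w) (K!w))) * \<xi> t x I * \<xi> t x K
      + (\<Prod>w<p. ginv (g t) x (I!w) (K!w)) * hodge_lap (g t) (\<xi> t) p x I * \<xi> t x K
      + (\<Prod>w<p. ginv (g t) x (I!w) (K!w)) * \<xi> t x I * hodge_lap (g t) (\<xi> t) p x K))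
     (at t within S)"
    unfolding normsq_def tinner_def
    by (rule contraction_has_derivative[where M="\<lambda>s. ginv (g s) x" and A="\<lambda>s. \<xi> s x" and B="\<lambda>s. \<xi> s x"])
       (rule dginv, (rule heat, simp add: tuples_def)+)
qed (rule contraction_hodge_lap[where X="\<xi> t" and G="g t" and p=p and x=x, OF M_sym anti])

lemma metric_chart_slice:
  fixes g :: "real \<Rightarrow> real^'n::finite \<Rightarrow> real^'n^'n"
  assumes "open U" and slice: "\<And>y. y \<in> U \<Longrightarrow> (t, y) \<in> W"
    and g_smooth: "\<And>i j. Cinf_on W (\<lambda>z. g (fst z) (snd z) $ i $ j)"
    and "\<And>y i j. y \<in> U \<Longrightarrow> g t y $ i $ j = g t y $ j $ i"
    and g_pos: "\<And>y v. y \<in> U \<Longrightarrow> v \<noteq> 0 \<Longrightarrow> v \<bullet> (g t y *v v) > 0"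
  shows "metric_chart (g t) U"
proof
  show "\<And>y. y \<in> U \<Longrightarrow> det (g t y) \<noteq> 0"
    by (rule det_nonzero_if_posdef) (rule g_pos)
  show "\<And>y i j k. y \<in> U \<Longrightarrow> (\<lambda>h. g t (y + h *\<^sub>R axis k 1) $ i $ j) differentiable (at 0)"
    by (rule Cinf_on_line_differentiable[where \<phi>="\<lambda>s y. g s y $ _ $ _", OF g_smooth slice])
  show "\<And>y i j k l. y \<in> U \<Longrightarrow> (\<lambda>h. pd k (\<lambda>z. g t z $ i $ j) (y + h *\<^sub>R axis l 1)) differentiable (at 0)"
    by (rule Cinf_on_pd_line_differentiable[where \<phi>="\<lambda>s y. g s y $ _ $ _", OF g_smooth slice])
qed (use assms in auto)

theorem lemma1:
  fixes g :: "real \<Rightarrow> real^'n::finite \<Rightarrow> real^'n^'n"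
    and \<xi> :: "real \<Rightarrow> real^'n \<Rightarrow> 'n list \<Rightarrow> real"
    and U :: "(real^'n) set" and W :: "(real \<times> (real^'n)) set"
    and T :: real and p :: nat
  assumes U_open: "open U"
    and W_open: "open W" and W_sub: "{0..<T} \<times> U \<subseteq> W"
    and g_smooth: "\<And>i j. Cinf_on W (\<lambda>z. g (fst z) (snd z) $ i $ j)"
    and xi_smooth: "\<And>I. Cinf_on W (\<lambda>z. \<xi> (fst z) (snd z) I)"
    and g_sym: "\<And>t x i j. t \<in> {0..<T} \<Longrightarrow> x \<in> U \<Longrightarrow> g t x $ i $ j = g t x $ j $ i"
    and g_pos: "\<And>t x v. t \<in> {0..<T} \<Longrightarrow> x \<in> U \<Longrightarrow> v \<noteq> 0 \<Longrightarrow> v \<bullet> (g t x *v v) > 0"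
    and ricci_flow: "\<And>t x i j. t \<in> {0..<T} \<Longrightarrow> x \<in> U \<Longrightarrow>
          ((\<lambda>s. g s x $ i $ j) has_real_derivative (- 2 * Ric (g t) x i j)) (at t within {0..<T})"
    and xi_antisym: "\<And>t x I s r. t \<in> {0..<T} \<Longrightarrow> x \<in> U \<Longrightarrow> length I = p \<Longrightarrow> s < r \<Longrightarrow> r < p \<Longrightarrow>
          \<xi> t x (I[s := I ! r, r := I ! s]) = - \<xi> t x I"
    and heat: "\<And>t x I. t \<in> {0..<T} \<Longrightarrow> x \<in> U \<Longrightarrow> length I = p \<Longrightarrow>
          ((\<lambda>s. \<xi> s x I) has_real_derivative hodge_lap (g t) (\<xi> t) p x I) (at t within {0..<T})"
  shows "\<forall>t\<in>{0..<T}. \<forall>x\<in>U.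
     ((\<lambda>s. normsq (g s) (\<xi> s) p x) has_real_derivative
        (lap (g t) (normsq (g t) (\<xi> t) p) x
         - 2 * tinner (g t) x (Suc p) (cov (g t) (\<xi> t) x) (cov (g t) (\<xi> t) x)
         - real p * (real p - 1) * curv_term (g t) (\<xi> t) p x))
      (at t within {0..<T})"
proof (intro ballI)
  fix t x assume t: "t \<in> {0..<T}" and x: "x \<in> U"
  have slice: "\<And>y. y \<in> U \<Longrightarrow> (t, y) \<in> W" using W_sub t by auto
  interpret metric_chart "g t" U
    by (rule metric_chart_slice[OF U_open slice g_smooth]) (use g_sym g_pos t in auto)
  have lap: "lap (g t) (normsq (g t) (\<xi> t) p) x =
     2 * tinner (g t) x p (\<lambda>I. \<Sum>j\<in>UNIV. \<Sum>k\<in>UNIV. ginv (g t) x j k * cov (g t) (cov (g t) (\<xi> t)) x (I @ [j, k])) (\<xi> t x)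
     + 2 * tinner (g t) x (Suc p) (cov (g t) (\<xi> t) x) (cov (g t) (\<xi> t) x)"
    unfolding normsq_def[abs_def]
    by (rule lap_tinner[OF x Cinf_on_line_differentiable[where \<phi>="\<lambda>s y. \<xi> s y _", OF xi_smooth slice]
          Cinf_on_pd_line_differentiable[where \<phi>="\<lambda>s y. \<xi> s y _", OF xi_smooth slice]])
  have dginv: "((\<lambda>s. ginv (g s) x a b) has_real_derivative
      - (\<Sum>c\<in>UNIV. \<Sum>d\<in>UNIV. ginv (g t) x a c * (- 2 * Ric (g t) x c d) * ginv (g t) x d b))
      (at t within {0..<T})" for a b
    unfolding ginv_def
    by (rule matrix_inv_has_derivative) (use ricci_flow[OF t x] det_G_nonzero[OF x] t in auto)
  have anti: "\<xi> t x (list_swap a b J) = - \<xi> t x J" if "length J = p" "a < b" "b < p" for J a b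
    unfolding list_swap_def using xi_antisym[OF t x that] .
  from normsq_has_derivative_heat[OF ginv_sym[OF x] dginv heat[OF t x] anti]
  show "((\<lambda>s. normsq (g s) (\<xi> s) p x) has_real_derivative
        (lap (g t) (normsq (g t) (\<xi> t) p) x
         - 2 * tinner (g t) x (Suc p) (cov (g t) (\<xi> t) x) (cov (g t) (\<xi> t) x)
         - real p * (real p - 1) * curv_term (g t) (\<xi> t) p x)) (at t within {0..<T})"
    unfolding lap by simp
qed

end
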